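(* Let $n\ge2$ and let $Gr_n$ be the grid graph with vertex set $\{0,\dots,2^n\}^2$, edges between points at $\ell_1$-distance 1, and the $\ell_1$-metric. Let $T=\bigcup_{k=0}^{n-2}T_k$ with $T_k=\{1,2,3,4\}^k$ ($T_0=\{\emptyset\}$), and for $t\in T_k$ write $|t|=k$. Then there exist signed measures $\{\mu_t\}_{t\in T}$ on $V(Gr_n)$, each of total mass $0$, such that for every $t\in T$: (P1) $\mathrm{diam}(\mathrm{supp}(\mu_t))\le C_12^{n-|t|}$; (P2) for every $t'\in T\setminus\{t\}$, $\mathrm{dist}(\mathrm{supp}(\mu_t),\mathrm{supp}(\mu_{t'}))\ge C_2^{-1}2^{n-\max(|t|,|t'|)}$; (P3) $\|\mu_t\|_{\mathrm{TC}}\ge C_3^{-1}4^{-|t|}$; (P4) for every $A\subseteq V(Gr_n)$, $|\mu_t(A)|\le C_4\min\{2^{-n-1-|t|},\,4^{-n}(\mathrm{diam}(A)+1)\}$; (P5) there is $u\in V(Gr_n)$ such that $\mathrm{supp}(\mu_t)\cup\{u\}$ induces a connected subgraph of $Gr_n$; with $C_1=\tfrac12$, $C_2=4$, $C_3=16$, $C_4=1$.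
   Context: $\mathrm{supp}(\mu)=\{v:\mu(\{v\})\ne0\}$; diam and dist are with respect to the $\ell_1$-metric on $V(Gr_n)$. $\|\mu\|_{\mathrm{TC}}=\inf\sum_ia_i d(x_i,y_i)$ over representations $\mu=\sum_ia_i(\delta_{x_i}-\delta_{y_i})$ with $a_i\ge0$. *)

theory Defs
  imports Complex_Main
begin

type_synonym vert = "int \<times> int"

definition grid_V :: "nat \<Rightarrow> vert set" where
  "grid_V n = {0..2^n} \<times> {0..2^n}"

definition l1 :: "vert \<Rightarrow> vert \<Rightarrow> real" where
  "l1 p q = real_of_int (\<bar>fst p - fst q\<bar> + \<bar>snd p - snd q\<bar>)"

definition grid_adj :: "vert \<Rightarrow> vert \<Rightarrow> bool" where
  "grid_adj p q \<longleftrightarrow> l1 p q = 1"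

text \<open>Signed measures on the finite set V(Gr_n) are represented by their
  point masses mu :: vert => real (vanishing off V(Gr_n)); mu(A) = sum over A.\<close>
definition meas :: "(vert \<Rightarrow> real) \<Rightarrow> vert set \<Rightarrow> real" where
  "meas mu A = (\<Sum>v\<in>A. mu v)"

definition supp :: "(vert \<Rightarrow> real) \<Rightarrow> vert set" where
  "supp mu = {v. mu v \<noteq> 0}"

definition diam :: "vert set \<Rightarrow> real" where
  "diam S = (if S = {} then 0 else Max {l1 x y | x y. x \<in> S \<and> y \<in> S})"

definition setdist :: "vert set \<Rightarrow> vert set \<Rightarrow> real" where
  "setdist S S' = (if S = {} \<or> S' = {} then 0 else Min {l1 x y | x y. x \<in> S \<and> y \<in> S'})"

definition tc_norm :: "nat \<Rightarrow> (vert \<Rightarrow> real) \<Rightarrow> real" where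
  "tc_norm n mu = Inf {(\<Sum>i<m. a i * l1 (x i) (y i)) | (m::nat) (a::nat \<Rightarrow> real) (x::nat \<Rightarrow> vert) (y::nat \<Rightarrow> vert).
      (\<forall>i<m. a i \<ge> 0 \<and> x i \<in> grid_V n \<and> y i \<in> grid_V n) \<and>
      (\<forall>v. mu v = (\<Sum>i<m. a i * ((if v = x i then 1 else 0) - (if v = y i then 1 else 0))))}"

definition induces_connected :: "vert set \<Rightarrow> bool" where
  "induces_connected W \<longleftrightarrow> (\<forall>p\<in>W. \<forall>q\<in>W. \<exists>ps. ps \<noteq> [] \<and> hd ps = p \<and> last ps = q \<and>
      set ps \<subseteq> W \<and> (\<forall>i. Suc i < length ps \<longrightarrow> grid_adj (ps ! i) (ps ! Suc i)))"

definition index_T :: "nat \<Rightarrow> nat list set" where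
  "index_T n = {t. set t \<subseteq> {1,2,3,4} \<and> length t \<le> n - 2}"

end

theory Submission
  imports Defs
begin

text \<open>A word t in {1,2,3,4}^k addresses, digit by digit through quadrants, one of the 4^k dyadic
  squares Q_t of side 4q = 2^(n-k). The measure mu_t puts mass 4^(-n) on each of the q lattice
  points of a vertical segment through the centre of Q_t and mass -4^(-n) on the q points right
  above them. Segments of one level lie in different squares, and segments of different levels
  lie on vertical lines whose x-coordinates have different 2-adic valuations; this separates the
  supports. Pairing mu_t with the 1-Lipschitz function -y shows that moving the positive half onto
  the negative one costs at least 4^(-n) q^2 = 4^(-k)/16. Any set A meets each half in at most
  min(q, diam A + 1) points, which bounds the masses mu_t(A).\<close>

lemma finite_grid_V [simp]: "finite (grid_V n)"
  by (simp add: grid_V_def)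

lemma l1_self [simp]: "l1 x x = 0"
  by (simp add: l1_def)

lemma l1_pair_image: "{l1 x y | x y. x \<in> A \<and> y \<in> B} = (\<lambda>(x, y). l1 x y) ` (A \<times> B)"
  by force

lemma l1_le_diam:
  assumes "finite A" "x \<in> A" "y \<in> A"
  shows "l1 x y \<le> diam A"
  unfolding diam_def l1_pair_image using assms by (auto intro!: Max_ge)

lemma diam_le:
  assumes "finite A" "0 \<le> D" "\<And>x y. x \<in> A \<Longrightarrow> y \<in> A \<Longrightarrow> l1 x y \<le> D"
  shows "diam A \<le> D"
  unfolding diam_def l1_pair_image using assms by auto

lemma diam_nonneg: "finite A \<Longrightarrow> 0 \<le> diam A"
  by (metis all_not_in_conv diam_def l1_le_diam l1_self order.refl)

lemma diam_mono:
  assumes "finite A" "B \<subseteq> A"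
  shows "diam B \<le> diam A"
  using assms finite_subset[OF assms(2,1)]
  by (intro diam_le) (auto intro: diam_nonneg l1_le_diam)

lemma setdist_ge:
  assumes "finite A" "finite B" "A \<noteq> {}" "B \<noteq> {}" "\<And>x y. x \<in> A \<Longrightarrow> y \<in> B \<Longrightarrow> D \<le> l1 x y"
  shows "D \<le> setdist A B"
  unfolding setdist_def l1_pair_image using assms by auto

definition vseg :: "int \<Rightarrow> int \<Rightarrow> int \<Rightarrow> vert set" where
  "vseg x y l = {x} \<times> {y..<y + l}"

lemma finite_vseg [simp]: "finite (vseg x y l)"
  by (simp add: vseg_def)

lemma card_vseg [simp]: "card (vseg x y l) = nat l"
  by (simp add: vseg_def card_cartesian_product)

lemma diam_vseg: "0 \<le> l \<Longrightarrow> diam (vseg x y l) \<le> l"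
  by (rule diam_le) (auto simp: vseg_def l1_def)

lemma vseg_double:
  assumes "0 \<le> q"
  shows "vseg x y (2 * q) = vseg x y q \<union> vseg x (y + q) q"
  using assms by (auto simp: vseg_def)

lemma sum_indicator_vseg:
  "(\<Sum>i<nat q. if v = (x, y + int i) then 1 else 0 :: real) = (if v \<in> vseg x y q then 1 else 0)"
proof -
  have "{i. i < nat q \<and> v = (x, y + int i)} = (if v \<in> vseg x y q then {nat (snd v - y)} else {})"
    by (cases v) (auto simp: vseg_def)
  then show ?thesis
    by (simp add: sum.If_cases lessThan_def Collect_conj_eq[symmetric])
qed

lemma card_vertical_le_diam:
  assumes "finite B" "B \<subseteq> {x} \<times> UNIV"
  shows "real (card B) \<le> diam B + 1"
proof (cases "B = {}")
  case True
  then show ?thesis by (simp add: diam_def)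
next
  case False
  define lo where "lo = Min (snd ` B)"
  define hi where "hi = Max (snd ` B)"
  have B_sub: "B \<subseteq> vseg x lo (hi - lo + 1)"
  proof
    fix v assume "v \<in> B"
    then have "lo \<le> snd v" "snd v \<le> hi" "fst v = x"
      using assms by (auto simp: lo_def hi_def)
    then show "v \<in> vseg x lo (hi - lo + 1)"
      by (cases v) (simp add: vseg_def)
  qed
  have "lo \<in> snd ` B" "hi \<in> snd ` B"
    using assms(1) False by (simp_all add: lo_def hi_def)
  then have ends: "(x, lo) \<in> B" "(x, hi) \<in> B"
    using assms(2) by auto
  have "card B \<le> nat (hi - lo + 1)"
    using card_mono[OF finite_vseg B_sub] by simp
  moreover have "l1 (x, hi) (x, lo) \<le> diam B"
    using l1_le_diam[OF assms(1) ends(2,1)] .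
  moreover have "lo \<le> hi"
    using ends B_sub by (auto simp: vseg_def)
  ultimately show ?thesis
    by (simp add: l1_def)
qed

lemma induces_connected_vseg: "induces_connected (vseg x y l)"
  unfolding induces_connected_def
proof (intro ballI)
  fix p q assume p: "p \<in> vseg x y l" and q: "q \<in> vseg x y l"
  then obtain a b where ab: "p = (x, a)" "q = (x, b)" "y \<le> a" "a < y + l" "y \<le> b" "b < y + l"
    by (auto simp: vseg_def)
  define d :: int where "d = sgn (b - a)"
  define L where "L = nat \<bar>b - a\<bar>"
  define ps where "ps = map (\<lambda>k. (x, a + d * int k)) [0..<L + 1]"
  have ps_nth: "ps ! k = (x, a + d * int k)" if "k \<le> L" for k
    using that by (simp add: ps_def nth_append del: upt_Suc)
  have "ps \<noteq> []" "length ps = L + 1"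
    by (simp_all add: ps_def)
  moreover have "hd ps = p" "last ps = q"
    using ps_nth[of 0] ps_nth[of L] \<open>ps \<noteq> []\<close> \<open>length ps = L + 1\<close> ab
    by (simp_all add: hd_conv_nth last_conv_nth d_def L_def sgn_if)
  moreover have "set ps \<subseteq> vseg x y l"
    using ab by (auto simp: ps_def vseg_def d_def L_def sgn_if simp del: upt_Suc)
  moreover have "grid_adj (ps ! i) (ps ! Suc i)" if "Suc i < length ps" for i
    using that \<open>length ps = L + 1\<close> ps_nth[of i] ps_nth[of "Suc i"] ab
    by (auto simp: grid_adj_def l1_def d_def L_def sgn_if algebra_simps)
  ultimately show "\<exists>ps. ps \<noteq> [] \<and> hd ps = p \<and> last ps = q \<and> set ps \<subseteq> vseg x y l \<and>
      (\<forall>i. Suc i < length ps \<longrightarrow> grid_adj (ps ! i) (ps ! Suc i))"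
    by blast
qed

definition transport_repr ::
    "nat \<Rightarrow> (vert \<Rightarrow> real) \<Rightarrow> nat \<Rightarrow> (nat \<Rightarrow> real) \<Rightarrow> (nat \<Rightarrow> vert) \<Rightarrow> (nat \<Rightarrow> vert) \<Rightarrow> bool" where
  "transport_repr n mu m a x y \<longleftrightarrow>
     (\<forall>i<m. 0 \<le> a i \<and> x i \<in> grid_V n \<and> y i \<in> grid_V n) \<and>
     (\<forall>v. mu v = (\<Sum>i<m. a i * ((if v = x i then 1 else 0) - (if v = y i then 1 else 0))))"

lemma tc_norm_transport_repr:
  "tc_norm n mu = Inf {\<Sum>i<m. a i * l1 (x i) (y i) | m a x y. transport_repr n mu m a x y}"
  by (simp add: tc_norm_def transport_repr_def)

lemma sum_transport_repr_mult:
  assumes "transport_repr n mu m a x y"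
  shows "(\<Sum>v\<in>grid_V n. mu v * g v) = (\<Sum>i<m. a i * (g (x i) - g (y i)))"
proof -
  have ends: "x i \<in> grid_V n" "y i \<in> grid_V n" if "i < m" for i
    using assms that by (auto simp: transport_repr_def)
  have mu: "mu v = (\<Sum>i<m. a i * ((if v = x i then 1 else 0) - (if v = y i then 1 else 0)))" for v
    using assms unfolding transport_repr_def by blast
  have "(\<Sum>v\<in>grid_V n. mu v * g v) =
      (\<Sum>v\<in>grid_V n. \<Sum>i<m. a i * ((if v = x i then g v else 0) - (if v = y i then g v else 0)))"
    unfolding mu sum_distrib_right by (intro sum.cong refl) (simp add: algebra_simps)
  also have "\<dots> = (\<Sum>i<m. \<Sum>v\<in>grid_V n. a i * ((if v = x i then g v else 0) - (if v = y i then g v else 0)))"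
    by (rule sum.swap)
  also have "\<dots> = (\<Sum>i<m. a i * (g (x i) - g (y i)))"
    using ends by (intro sum.cong refl) (simp add: sum_distrib_left[symmetric] sum_subtractf)
  finally show ?thesis .
qed

lemma pairing_le_tc_norm:
  assumes repr: "transport_repr n mu m a x y"
    and lip: "\<And>u v. u \<in> grid_V n \<Longrightarrow> v \<in> grid_V n \<Longrightarrow> g u - g v \<le> l1 u v"
  shows "(\<Sum>v\<in>grid_V n. mu v * g v) \<le> tc_norm n mu"
  unfolding tc_norm_transport_repr
proof (rule cInf_greatest)
  show "{\<Sum>i<m. a i * l1 (x i) (y i) | m a x y. transport_repr n mu m a x y} \<noteq> {}"
    using repr by blast
next
  fix c assume "c \<in> {\<Sum>i<m. a i * l1 (x i) (y i) | m a x y. transport_repr n mu m a x y}"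
  then obtain m' a' x' y' where repr': "transport_repr n mu m' a' x' y'"
    and c: "c = (\<Sum>i<m'. a' i * l1 (x' i) (y' i))"
    by blast
  have "(\<Sum>v\<in>grid_V n. mu v * g v) = (\<Sum>i<m'. a' i * (g (x' i) - g (y' i)))"
    using sum_transport_repr_mult[OF repr'] .
  also have "\<dots> \<le> c"
    unfolding c using repr' lip
    by (intro sum_mono mult_left_mono) (auto simp: transport_repr_def)
  finally show "(\<Sum>v\<in>grid_V n. mu v * g v) \<le> c" .
qed

definition dipole :: "real \<Rightarrow> int \<Rightarrow> int \<Rightarrow> int \<Rightarrow> vert \<Rightarrow> real" where
  "dipole c x y q v = c * ((if v \<in> vseg x y q then 1 else 0) - (if v \<in> vseg x (y + q) q then 1 else 0))"

lemma supp_dipole: "c \<noteq> 0 \<Longrightarrow> supp (dipole c x y q) = vseg x y (2 * q)"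
  by (auto simp: supp_def dipole_def vseg_def)

lemma meas_dipole:
  "finite A \<Longrightarrow>
    meas (dipole c x y q) A = c * (real (card (A \<inter> vseg x y q)) - real (card (A \<inter> vseg x (y + q) q)))"
  by (simp add: meas_def dipole_def sum_distrib_left[symmetric] sum_subtractf sum.If_cases)

lemma meas_dipole_eq_0:
  assumes "finite A" "vseg x y (2 * q) \<subseteq> A"
  shows "meas (dipole c x y q) A = 0"
proof (cases "0 \<le> q")
  case True
  then show ?thesis
    using assms by (simp add: meas_dipole vseg_double Int_absorb1)
next
  case False
  then show ?thesis
    using assms by (simp add: meas_dipole vseg_def)
qed

lemma abs_meas_dipole_le:
  assumes "finite A" "0 \<le> c" "0 \<le> q"
  shows "\<bar>meas (dipole c x y q) A\<bar> \<le> c * min (real_of_int q) (diam A + 1)"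
proof -
  have bound: "real (card (A \<inter> vseg x y' q)) \<le> min (real_of_int q) (diam A + 1)" for y'
  proof -
    have "card (A \<inter> vseg x y' q) \<le> nat q"
      using card_mono[of "vseg x y' q" "A \<inter> vseg x y' q"] by simp
    moreover have "real (card (A \<inter> vseg x y' q)) \<le> diam (A \<inter> vseg x y' q) + 1"
      by (rule card_vertical_le_diam) (auto simp: assms vseg_def)
    moreover have "diam (A \<inter> vseg x y' q) \<le> diam A"
      by (rule diam_mono) (auto simp: assms)
    ultimately show ?thesis
      using assms(3) by simp
  qed
  show ?thesis
    using bound[of y] bound[of "y + q"] assms(1,2)
    by (simp add: meas_dipole abs_mult abs_le_iff mult_left_mono)
qed

lemma transport_repr_dipole:
  assumes "0 \<le> c" "vseg x y (2 * q) \<subseteq> grid_V n"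
  shows "transport_repr n (dipole c x y q) (nat q) (\<lambda>_. c) (\<lambda>i. (x, y + int i)) (\<lambda>i. (x, y + q + int i))"
  using assms
  by (auto simp: transport_repr_def dipole_def sum_indicator_vseg sum_subtractf
      sum_distrib_left[symmetric] vseg_def subset_iff)

lemma tc_norm_dipole_ge:
  assumes "0 \<le> c" "0 \<le> q" "vseg x y (2 * q) \<subseteq> grid_V n"
  shows "c * q\<^sup>2 \<le> tc_norm n (dipole c x y q)"
proof -
  let ?g = "\<lambda>v::vert. - real_of_int (snd v)"
  have "(\<Sum>v\<in>grid_V n. dipole c x y q v * ?g v) = (\<Sum>i<nat q. c * real_of_int q)"
    by (subst sum_transport_repr_mult[OF transport_repr_dipole[OF assms(1,3)]]) simp
  also have "\<dots> = c * q\<^sup>2"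
    using assms(2) by (simp add: power2_eq_square)
  finally have "(\<Sum>v\<in>grid_V n. dipole c x y q v * ?g v) = c * q\<^sup>2" .
  moreover have "(\<Sum>v\<in>grid_V n. dipole c x y q v * ?g v) \<le> tc_norm n (dipole c x y q)"
    by (rule pairing_le_tc_norm[OF transport_repr_dipole[OF assms(1,3)]])
      (auto simp: l1_def)
  ultimately show ?thesis
    by simp
qed

text \<open>The digit d selects the quadrant with column bit (d - 1) mod 2 and row bit (d - 1) div 2;
  the first digit of t is the least significant one.\<close>

fun quad_col :: "nat list \<Rightarrow> nat" where
  "quad_col [] = 0"
| "quad_col (d # t) = (d - 1) mod 2 + 2 * quad_col t"

fun quad_row :: "nat list \<Rightarrow> nat" where
  "quad_row [] = 0"
| "quad_row (d # t) = (d - 1) div 2 + 2 * quad_row t"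

lemma quad_col_less: "quad_col t < 2 ^ length t"
  by (induction t) auto

lemma quad_row_less: "set t \<subseteq> {1, 2, 3, 4} \<Longrightarrow> quad_row t < 2 ^ length t"
  by (induction t) auto

lemma digit_pair_eq:
  fixes a b x y :: nat
  assumes "a < 2" "b < 2" "a + 2 * x = b + 2 * y"
  shows "a = b" "x = y"
  using assms by arith+

lemma quad_coords_inj:
  assumes "set t \<subseteq> {1, 2, 3, 4}" "set t' \<subseteq> {1, 2, 3, 4}" "length t = length t'"
    and "quad_col t = quad_col t'" "quad_row t = quad_row t'"
  shows "t = t'"
  using assms
proof (induction t arbitrary: t')
  case Nil
  then show ?case by simp
next
  case (Cons d t)
  then obtain d' u where t': "t' = d' # u"
    by (cases t') auto
  have digits: "1 \<le> d" "d \<le> 4" "1 \<le> d'" "d' \<le> 4"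
    using Cons.prems(1,2) by (auto simp: t')
  have col_eq: "(d - 1) mod 2 + 2 * quad_col t = (d' - 1) mod 2 + 2 * quad_col u"
    using Cons.prems(4) by (simp only: t' quad_col.simps)
  have col: "(d - 1) mod 2 = (d' - 1) mod 2" "quad_col t = quad_col u"
    using digit_pair_eq[OF _ _ col_eq] by simp_all
  have row_eq: "(d - 1) div 2 + 2 * quad_row t = (d' - 1) div 2 + 2 * quad_row u"
    using Cons.prems(5) by (simp only: t' quad_row.simps)
  have row: "(d - 1) div 2 = (d' - 1) div 2" "quad_row t = quad_row u"
    using digit_pair_eq[OF _ _ row_eq] digits by simp_all
  have "d - 1 = d' - 1"
    using div_mult_mod_eq[of "d - 1" 2] div_mult_mod_eq[of "d' - 1" 2] col(1) row(1) by metis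
  then have "d = d'"
    using digits by simp
  moreover have "t = u"
    using Cons.IH[of u] Cons.prems(1-3) col(2) row(2) by (simp add: t')
  ultimately show ?case
    by (simp add: t')
qed

text \<open>With q = quad_scale n t, the square Q_t is [4q c, 4q (c + 1)] \<times> [4q r, 4q (r + 1)] for
  c = quad_col t and r = quad_row t. The support of its dipole is the segment of the vertical line
  x = 4q c + 2q through the centre of Q_t with 4q r + q \<le> y < 4q r + 3q.\<close>

definition quad_scale :: "nat \<Rightarrow> nat list \<Rightarrow> int" where
  "quad_scale n t = 2 ^ (n - length t - 2)"

definition quad_x :: "nat \<Rightarrow> nat list \<Rightarrow> int" where
  "quad_x n t = 2 ^ (n - length t - 1) * (2 * int (quad_col t) + 1)"

definition quad_y :: "nat \<Rightarrow> nat list \<Rightarrow> int" where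
  "quad_y n t = quad_scale n t * (4 * int (quad_row t) + 1)"

definition quad_segment :: "nat \<Rightarrow> nat list \<Rightarrow> vert set" where
  "quad_segment n t = vseg (quad_x n t) (quad_y n t) (2 * quad_scale n t)"

lemma quad_scale_pos: "0 < quad_scale n t"
  by (simp add: quad_scale_def)

lemma real_quad_scale:
  assumes "length t + 2 \<le> n"
  shows "real_of_int (quad_scale n t) = 2 ^ (n - length t) / 4"
proof -
  obtain p where "n = length t + 2 + p"
    using assms le_iff_add by blast
  then show ?thesis
    by (simp add: quad_scale_def power_add)
qed

lemma quad_x_eq: "length t + 2 \<le> n \<Longrightarrow> quad_x n t = 2 * quad_scale n t * (2 * int (quad_col t) + 1)"
  by (simp add: quad_x_def quad_scale_def Suc_diff_Suc[symmetric] numeral_2_eq_2)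

lemma quad_segment_subset_grid:
  assumes digits: "set t \<subseteq> {1, 2, 3, 4}" and depth: "length t + 2 \<le> n"
  shows "quad_segment n t \<subseteq> grid_V n"
proof -
  define q where "q = quad_scale n t"
  define K where "K = (2::int) ^ length t"
  obtain p where "n = length t + 2 + p"
    using depth le_iff_add by blast
  then have side: "2 ^ n = 4 * q * K"
    by (simp add: q_def K_def quad_scale_def power_add)
  have "int (quad_col t) < K" "int (quad_row t) < K"
    using quad_col_less[of t] quad_row_less[OF digits] unfolding K_def
    by (metis of_nat_less_iff of_nat_numeral of_nat_power)+
  then have col_le: "2 * int (quad_col t) + 1 \<le> 2 * K" and row_le: "4 * int (quad_row t) + 3 \<le> 4 * K"
    by linarith+
  have q_pos: "0 \<le> q"
    using quad_scale_pos[of n t] by (simp add: q_def)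
  have x_le: "2 * q * (2 * int (quad_col t) + 1) \<le> 4 * q * K"
    using mult_left_mono[OF col_le q_pos] by (simp add: algebra_simps)
  have y_le: "q * (4 * int (quad_row t) + 1) + 2 * q \<le> 4 * q * K"
    using mult_left_mono[OF row_le q_pos] by (simp add: algebra_simps)
  show ?thesis
  proof
    fix v assume "v \<in> quad_segment n t"
    then have "fst v = 2 * q * (2 * int (quad_col t) + 1)"
      "q * (4 * int (quad_row t) + 1) \<le> snd v" "snd v < q * (4 * int (quad_row t) + 1) + 2 * q"
      using depth by (auto simp: quad_segment_def vseg_def quad_x_eq quad_y_def q_def)
    moreover have "0 \<le> q * (4 * int (quad_row t) + 1)" "0 \<le> 2 * q * (2 * int (quad_col t) + 1)"
      using q_pos by simp_all
    ultimately have "0 \<le> fst v" "fst v \<le> 4 * q * K" "0 \<le> snd v" "snd v \<le> 4 * q * K"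
      using x_le y_le by linarith+
    then show "v \<in> grid_V n"
      by (cases v) (simp add: grid_V_def side)
  qed
qed

lemma pow2_odd_multiples_dist:
  fixes c c' :: int
  assumes "p' < p"
  shows "2 ^ p' \<le> \<bar>2 ^ p * (2 * c + 1) - 2 ^ p' * (2 * c' + 1)\<bar>"
proof -
  obtain d where p: "p = p' + Suc d"
    using assms less_iff_Suc_add by auto
  define z where "z = 2 ^ Suc d * (2 * c + 1) - (2 * c' + 1)"
  have "odd z"
    by (simp add: z_def)
  then have "1 \<le> \<bar>z\<bar>"
    by (cases "z = 0") auto
  moreover have "2 ^ p * (2 * c + 1) - 2 ^ p' * (2 * c' + 1) = 2 ^ p' * z"
    unfolding p z_def power_add by (simp only: algebra_simps)
  ultimately show ?thesis
    using mult_left_mono[of 1 "\<bar>z\<bar>" "2 ^ p' :: int"] by (simp add: abs_mult)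
qed

lemma quad_segment_memD:
  assumes "a \<in> quad_segment n t" "length t + 2 \<le> n"
  shows "fst a = 2 * quad_scale n t * (2 * int (quad_col t) + 1)"
    and "quad_scale n t * (4 * int (quad_row t) + 1) \<le> snd a"
    and "snd a < quad_scale n t * (4 * int (quad_row t) + 3)"
  using assms by (auto simp: quad_segment_def vseg_def quad_x_eq quad_y_def algebra_simps)

lemma quad_x_dist_levels:
  assumes "length t < length t'" "length t' + 2 \<le> n"
  shows "quad_scale n t' \<le> \<bar>quad_x n t - quad_x n t'\<bar>"
proof -
  have "n - length t' - 1 < n - length t - 1"
    using assms by simp
  then have "2 ^ (n - length t' - 1) \<le> \<bar>quad_x n t - quad_x n t'\<bar>"
    unfolding quad_x_def by (rule pow2_odd_multiples_dist)
  moreover have "quad_scale n t' \<le> 2 ^ (n - length t' - 1)"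
    unfolding quad_scale_def by (rule power_increasing) auto
  ultimately show ?thesis
    by linarith
qed

lemma quad_segments_dist_same_level:
  assumes digits: "set t \<subseteq> {1, 2, 3, 4}" "set t' \<subseteq> {1, 2, 3, 4}"
    and same: "length t = length t'" and "t \<noteq> t'" and depth: "length t + 2 \<le> n"
    and a: "a \<in> quad_segment n t" and b: "b \<in> quad_segment n t'"
  shows "quad_scale n t \<le> \<bar>fst a - fst b\<bar> + \<bar>snd a - snd b\<bar>"
proof -
  define q where "q = quad_scale n t"
  have q': "quad_scale n t' = q"
    using same by (simp add: q_def quad_scale_def)
  have q_pos: "0 < q"
    by (simp add: q_def quad_scale_pos)
  note a_coords = quad_segment_memD[OF a depth, folded q_def]
  note b_coords = quad_segment_memD[OF b depth[unfolded same], unfolded q']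
  have "quad_col t \<noteq> quad_col t' \<or> quad_row t \<noteq> quad_row t'"
    using quad_coords_inj[OF digits same] \<open>t \<noteq> t'\<close> by blast
  then show ?thesis
  proof
    assume "quad_col t \<noteq> quad_col t'"
    then have "1 \<le> \<bar>int (quad_col t) - int (quad_col t')\<bar>"
      by linarith
    moreover have "fst a - fst b = 4 * q * (int (quad_col t) - int (quad_col t'))"
      by (simp add: a_coords b_coords algebra_simps)
    then have "\<bar>fst a - fst b\<bar> = 4 * q * \<bar>int (quad_col t) - int (quad_col t')\<bar>"
      using q_pos by (simp add: abs_mult)
    ultimately have "q \<le> \<bar>fst a - fst b\<bar>"
      using mult_left_mono[of 1 "\<bar>int (quad_col t) - int (quad_col t')\<bar>" "4 * q"] q_pos by simp
    then show ?thesis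
      by (simp add: q_def)
  next
    assume "quad_row t \<noteq> quad_row t'"
    then have "4 * int (quad_row t) + 4 \<le> 4 * int (quad_row t') \<or> 4 * int (quad_row t') + 4 \<le> 4 * int (quad_row t)"
      by linarith
    then have "q * (4 * int (quad_row t) + 4) \<le> q * (4 * int (quad_row t'))
        \<or> q * (4 * int (quad_row t') + 4) \<le> q * (4 * int (quad_row t))"
      using q_pos by (auto intro: mult_left_mono)
    then have "q \<le> \<bar>snd a - snd b\<bar>"
      using a_coords(2,3) b_coords(2,3) by (auto simp: distrib_left)
    then show ?thesis
      by (simp add: q_def)
  qed
qed

lemma quad_segments_separated:
  assumes digits: "set t \<subseteq> {1, 2, 3, 4}" "set t' \<subseteq> {1, 2, 3, 4}"
    and depth: "length t + 2 \<le> n" "length t' + 2 \<le> n" and "t \<noteq> t'"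
    and a: "a \<in> quad_segment n t" and b: "b \<in> quad_segment n t'"
  shows "(1/4) * 2 ^ (n - max (length t) (length t')) \<le> l1 a b"
proof -
  have fst_ab: "fst a = quad_x n t" "fst b = quad_x n t'"
    using a b by (auto simp: quad_segment_def vseg_def)
  have l1_ge: "real_of_int \<bar>fst a - fst b\<bar> \<le> l1 a b" "real_of_int (\<bar>fst a - fst b\<bar> + \<bar>snd a - snd b\<bar>) = l1 a b"
    by (simp_all add: l1_def)
  consider "length t < length t'" | "length t' < length t" | "length t = length t'"
    by linarith
  then show ?thesis
  proof cases
    case 1
    then have "real_of_int (quad_scale n t') \<le> l1 a b"
      using quad_x_dist_levels[OF 1 depth(2)] fst_ab l1_ge(1) by linarith
    then show ?thesis
      using 1 by (simp add: real_quad_scale[OF depth(2)] max_def)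
  next
    case 2
    then have "real_of_int (quad_scale n t) \<le> l1 a b"
      using quad_x_dist_levels[OF 2 depth(1)] fst_ab l1_ge(1) by (simp add: abs_minus_commute)
    then show ?thesis
      using 2 by (simp add: real_quad_scale[OF depth(1)] max_def)
  next
    case 3
    then have "real_of_int (quad_scale n t) \<le> l1 a b"
      using quad_segments_dist_same_level[OF digits 3 \<open>t \<noteq> t'\<close> depth(1) a b] l1_ge(2) by linarith
    then show ?thesis
      using 3 by (simp add: real_quad_scale[OF depth(1)])
  qed
qed

definition quad_dipole :: "nat \<Rightarrow> nat list \<Rightarrow> vert \<Rightarrow> real" where
  "quad_dipole n t = dipole ((1/4) ^ n) (quad_x n t) (quad_y n t) (quad_scale n t)"

lemma supp_quad_dipole: "supp (quad_dipole n t) = quad_segment n t"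
  by (simp add: quad_dipole_def quad_segment_def supp_dipole)

lemma quad_dipole_eq_0_outside:
  assumes "set t \<subseteq> {1, 2, 3, 4}" "length t + 2 \<le> n" "v \<notin> grid_V n"
  shows "quad_dipole n t v = 0"
  using quad_segment_subset_grid[OF assms(1,2)] assms(3)
  by (auto simp: supp_def simp flip: supp_quad_dipole)

lemma meas_quad_dipole_grid:
  assumes "set t \<subseteq> {1, 2, 3, 4}" "length t + 2 \<le> n"
  shows "meas (quad_dipole n t) (grid_V n) = 0"
  using quad_segment_subset_grid[OF assms]
  by (simp add: quad_dipole_def quad_segment_def meas_dipole_eq_0)

lemma diam_supp_quad_dipole:
  assumes "length t + 2 \<le> n"
  shows "diam (supp (quad_dipole n t)) \<le> (1/2) * 2 ^ (n - length t)"
  using diam_vseg[of "2 * quad_scale n t"] quad_scale_pos[of n t]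
  by (simp add: supp_quad_dipole quad_segment_def real_quad_scale[OF assms])

lemma setdist_supp_quad_dipole:
  assumes "set t \<subseteq> {1, 2, 3, 4}" "set t' \<subseteq> {1, 2, 3, 4}"
    and "length t + 2 \<le> n" "length t' + 2 \<le> n" and "t \<noteq> t'"
  shows "(1/4) * 2 ^ (n - max (length t) (length t')) \<le> setdist (supp (quad_dipole n t)) (supp (quad_dipole n t'))"
  unfolding supp_quad_dipole
  using quad_segments_separated[OF assms] quad_scale_pos[of n t] quad_scale_pos[of n t']
  by (intro setdist_ge) (auto simp: quad_segment_def vseg_def)

lemma tc_norm_quad_dipole_ge:
  assumes "set t \<subseteq> {1, 2, 3, 4}" "length t + 2 \<le> n"
  shows "(1/16) * (1/4) ^ length t \<le> tc_norm n (quad_dipole n t)"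
proof -
  define m where "m = n - length t"
  have n: "n = length t + m"
    using assms(2) by (simp add: m_def)
  have q: "real_of_int (quad_scale n t) = 2 ^ m / 4"
    using real_quad_scale[OF assms(2)] n by simp
  have "(1/4) ^ n * (real_of_int (quad_scale n t))\<^sup>2 = (1/16) * ((1/4) ^ n * 4 ^ m)"
    unfolding q by (simp add: power_divide power2_eq_square flip: power_mult_distrib)
  also have "\<dots> = (1/16) * (1/4) ^ length t"
    by (simp add: n power_add mult.assoc flip: power_mult_distrib)
  finally have "(1/16) * (1/4) ^ length t = (1/4) ^ n * (real_of_int (quad_scale n t))\<^sup>2"
    by simp
  also have "\<dots> \<le> tc_norm n (quad_dipole n t)"
    unfolding quad_dipole_def
    using quad_segment_subset_grid[OF assms] quad_scale_pos[of n t]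
    by (intro tc_norm_dipole_ge) (simp_all add: quad_segment_def)
  finally show ?thesis .
qed

lemma abs_meas_quad_dipole_le:
  assumes "length t + 2 \<le> n" "A \<subseteq> grid_V n"
  shows "\<bar>meas (quad_dipole n t) A\<bar> \<le> min ((1/2) ^ (n + 1 + length t)) ((1/4) ^ n * (diam A + 1))"
proof -
  define m where "m = n - length t"
  have n: "n = length t + m"
    using assms(1) by (simp add: m_def)
  have quarter: "(1/4::real) ^ j = (1/2) ^ j * (1/2) ^ j" for j
    by (simp flip: power_mult_distrib)
  have "(1/2::real) ^ m * 2 ^ m = 1"
    by (simp flip: power_mult_distrib)
  then have "(1/4) ^ n * real_of_int (quad_scale n t) = (1/2) ^ (n + 1 + length t) / 2"
    using assms(1) by (simp add: real_quad_scale n power_add quarter mult_ac)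
  moreover have "0 \<le> (1/4::real) ^ n * real_of_int (quad_scale n t)"
    using quad_scale_pos[of n t] by simp
  ultimately have "(1/4) ^ n * real_of_int (quad_scale n t) \<le> (1/2) ^ (n + 1 + length t)"
    by linarith
  moreover have "\<bar>meas (quad_dipole n t) A\<bar> \<le> (1/4) ^ n * min (real_of_int (quad_scale n t)) (diam A + 1)"
    unfolding quad_dipole_def
    using finite_subset[OF assms(2)] quad_scale_pos[of n t]
    by (intro abs_meas_dipole_le) simp_all
  ultimately show ?thesis
    by (simp add: min_mult_distrib_left)
qed

lemma induces_connected_supp_quad_dipole:
  assumes "set t \<subseteq> {1, 2, 3, 4}" "length t + 2 \<le> n"
  shows "\<exists>u\<in>grid_V n. induces_connected (supp (quad_dipole n t) \<union> {u})"
proof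
  have "(quad_x n t, quad_y n t) \<in> quad_segment n t"
    using quad_scale_pos[of n t] by (simp add: quad_segment_def vseg_def)
  then show "(quad_x n t, quad_y n t) \<in> grid_V n"
    using quad_segment_subset_grid[OF assms] by blast
  show "induces_connected (supp (quad_dipole n t) \<union> {(quad_x n t, quad_y n t)})"
    using \<open>(quad_x n t, quad_y n t) \<in> quad_segment n t\<close> induces_connected_vseg
    by (simp add: supp_quad_dipole insert_absorb quad_segment_def)
qed

theorem theorem3p1:
  fixes n :: nat
  assumes "n \<ge> 2"
  shows "\<exists>mu :: nat list \<Rightarrow> vert \<Rightarrow> real.
    \<forall>t\<in>index_T n.
      (\<forall>v. v \<notin> grid_V n \<longrightarrow> mu t v = 0) \<and>
      meas (mu t) (grid_V n) = 0 \<and>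
      diam (supp (mu t)) \<le> (1/2) * 2 ^ (n - length t) \<and>
      (\<forall>t'\<in>index_T n - {t}.
         setdist (supp (mu t)) (supp (mu t')) \<ge> (1/4) * 2 ^ (n - max (length t) (length t'))) \<and>
      tc_norm n (mu t) \<ge> (1/16) * (1/4) ^ length t \<and>
      (\<forall>A. A \<subseteq> grid_V n \<longrightarrow>
         \<bar>meas (mu t) A\<bar> \<le> 1 * min ((1/2) ^ (n + 1 + length t)) ((1/4) ^ n * (diam A + 1))) \<and>
      (\<exists>u\<in>grid_V n. induces_connected (supp (mu t) \<union> {u}))"
proof -
  have index: "set t \<subseteq> {1, 2, 3, 4}" "length t + 2 \<le> n" if "t \<in> index_T n" for t
    using that assms by (auto simp: index_T_def)
  show ?thesis
    unfolding mult_1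
    by (intro exI[of _ "quad_dipole n"] ballI conjI allI impI)
      (blast dest: index intro: quad_dipole_eq_0_outside meas_quad_dipole_grid diam_supp_quad_dipole
        setdist_supp_quad_dipole tc_norm_quad_dipole_ge abs_meas_quad_dipole_le
        induces_connected_supp_quad_dipole)+
qed

end
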